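(* The permutation representability problem is polynomial-time reducible to the group representability problem on trees.
   Context: Permutation representability problem: given a finite group $G$ (by its multiplication table) and an integer $n$ in unary, decide whether there is a nontrivial homomorphism from $G$ to the symmetric group $S_n$. Group representability problem on trees: given a finite group $G$ (by its multiplication table) and a finite tree $T$, decide whether there is a nontrivial homomorphism from $G$ to the automorphism group $\mathrm{Aut}(T)$ of $T$. *)

theory Defs
  imports "HOL-Algebra.Sym_Groups"
begin

text \<open>Only addition and truncated subtraction are available (no multiplication),
  together with indirect addressing; with unit cost this model is polynomially
  equivalent to Turing machines.\<close>

datatype instr =
    Const nat nat
  | Add nat nat nat
  | Sub nat nat nat
  | Load nat nat
  | Store nat nat
  | Jz nat nat
  | Jmp nat

type_synonym config = "nat \<times> (nat \<Rightarrow> nat)"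

fun exec_instr :: "instr \<Rightarrow> config \<Rightarrow> config" where
  "exec_instr (Const r c) (pc, M) = (Suc pc, M(r := c))"
| "exec_instr (Add r a b) (pc, M) = (Suc pc, M(r := M a + M b))"
| "exec_instr (Sub r a b) (pc, M) = (Suc pc, M(r := M a - M b))"
| "exec_instr (Load r a) (pc, M) = (Suc pc, M(r := M (M a)))"
| "exec_instr (Store a r) (pc, M) = (Suc pc, M(M a := M r))"
| "exec_instr (Jz r l) (pc, M) = (if M r = 0 then (l, M) else (Suc pc, M))"
| "exec_instr (Jmp l) (pc, M) = (l, M)"

definition step :: "instr list \<Rightarrow> config \<Rightarrow> config" where
  "step prog c = (if fst c < length prog then exec_instr (prog ! fst c) c else c)"

definition run :: "instr list \<Rightarrow> nat \<Rightarrow> config \<Rightarrow> config" where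
  "run prog t c = (step prog ^^ t) c"

definition halted :: "instr list \<Rightarrow> config \<Rightarrow> bool" where
  "halted prog c \<longleftrightarrow> length prog \<le> fst c"

text \<open>Input/output convention: cell 0 holds the length, cells 1..len the words.\<close>

definition init_config :: "nat list \<Rightarrow> config" where
  "init_config xs = (0, \<lambda>i. if i = 0 then length xs
                            else if i \<le> length xs then xs ! (i - 1) else 0)"

definition output_of :: "config \<Rightarrow> nat list" where
  "output_of c = map (\<lambda>i. snd c (Suc i)) [0..<snd c 0]"

fun bitlen :: "nat \<Rightarrow> nat" where
  "bitlen n = (if n = 0 then 0 else Suc (bitlen (n div 2)))"

definition input_size :: "nat list \<Rightarrow> nat" where
  "input_size xs = (\<Sum>x\<leftarrow>xs. Suc (bitlen x))"

definition poly_time_computable :: "(nat list \<Rightarrow> nat list) \<Rightarrow> bool" where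
  "poly_time_computable f \<longleftrightarrow>
     (\<exists>prog c d. \<forall>xs.
        (\<exists>t. t \<le> c * (input_size xs + 1) ^ d
             \<and> halted prog (run prog t (init_config xs))
             \<and> output_of (run prog t (init_config xs)) = f xs)
        \<and> input_size (f xs) \<le> c * (input_size xs + 1) ^ d)"

text \<open>Polynomial-time (many-one) reduction between promise problems, each given
  by a set of admissible instances and a set of yes-instances.\<close>

definition poly_reducible ::
  "nat list set \<Rightarrow> nat list set \<Rightarrow> nat list set \<Rightarrow> nat list set \<Rightarrow> bool" where
  "poly_reducible I1 Y1 I2 Y2 \<longleftrightarrow>
     (\<exists>f. poly_time_computable f \<and>
          (\<forall>xs\<in>I1. f xs \<in> I2 \<and> (xs \<in> Y1 \<longleftrightarrow> f xs \<in> Y2)))"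

text \<open>A table for a group of order m is a list of length m*m over {0..<m};
  the product of i and j is the entry in row i, column j.\<close>

definition table_group :: "nat \<Rightarrow> nat list \<Rightarrow> nat monoid" where
  "table_group m tab =
     \<lparr> carrier = {0..<m},
       mult = (\<lambda>i j. tab ! (i * m + j)),
       one = (THE e. e < m \<and> (\<forall>x<m. tab ! (e * m + x) = x \<and> tab ! (x * m + e) = x)) \<rparr>"

definition valid_group_table :: "nat \<Rightarrow> nat list \<Rightarrow> bool" where
  "valid_group_table m tab \<longleftrightarrow> length tab = m * m \<and> group (table_group m tab)"

definition nontrivial_hom :: "('a, 'c) monoid_scheme \<Rightarrow> ('b, 'd) monoid_scheme \<Rightarrow> bool" where
  "nontrivial_hom G H \<longleftrightarrow>
     (\<exists>h \<in> hom G H. \<exists>g \<in> carrier G. h g \<noteq> \<one>\<^bsub>H\<^esub>)"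

definition adj :: "(nat \<times> nat) list \<Rightarrow> nat \<Rightarrow> nat \<Rightarrow> bool" where
  "adj es u v \<longleftrightarrow> (u, v) \<in> set es \<or> (v, u) \<in> set es"

definition graph_connected :: "nat \<Rightarrow> (nat \<times> nat) list \<Rightarrow> bool" where
  "graph_connected k es \<longleftrightarrow> (\<forall>u<k. \<forall>v<k. (adj es)\<^sup>*\<^sup>* u v)"

definition has_cycle :: "(nat \<times> nat) list \<Rightarrow> bool" where
  "has_cycle es \<longleftrightarrow>
     (\<exists>vs. length vs \<ge> 3 \<and> distinct vs
           \<and> (\<forall>i. Suc i < length vs \<longrightarrow> adj es (vs ! i) (vs ! Suc i))
           \<and> adj es (last vs) (hd vs))"

definition is_tree :: "nat \<Rightarrow> (nat \<times> nat) list \<Rightarrow> bool" where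
  "is_tree k es \<longleftrightarrow> k \<ge> 1
     \<and> (\<forall>(u, v) \<in> set es. u < k \<and> v < k \<and> u \<noteq> v)
     \<and> graph_connected k es \<and> \<not> has_cycle es"

definition aut_group :: "nat \<Rightarrow> (nat \<times> nat) list \<Rightarrow> (nat \<Rightarrow> nat) monoid" where
  "aut_group k es =
     \<lparr> carrier = {p. p permutes {0..<k} \<and> (\<forall>u v. adj es u v \<longleftrightarrow> adj es (p u) (p v))},
       mult = (\<circ>), one = id \<rparr>"

text \<open>Permutation representability: input is m, the table, then n in unary.\<close>

definition enc_perm :: "nat \<Rightarrow> nat list \<Rightarrow> nat \<Rightarrow> nat list" where
  "enc_perm m tab n = m # tab @ replicate n 1"

definition PermRep_instances :: "nat list set" where
  "PermRep_instances = {enc_perm m tab n | m tab n. valid_group_table m tab}"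

definition PermRep_yes :: "nat list set" where
  "PermRep_yes = {enc_perm m tab n | m tab n.
      valid_group_table m tab \<and> nontrivial_hom (table_group m tab) (sym_group n)}"

definition enc_tree :: "nat \<Rightarrow> nat list \<Rightarrow> nat \<Rightarrow> (nat \<times> nat) list \<Rightarrow> nat list" where
  "enc_tree m tab k es = m # tab @ k # concat (map (\<lambda>(u, v). [u, v]) es)"

definition TreeRep_instances :: "nat list set" where
  "TreeRep_instances = {enc_tree m tab k es | m tab k es.
      valid_group_table m tab \<and> is_tree k es}"

definition TreeRep_yes :: "nat list set" where
  "TreeRep_yes = {enc_tree m tab k es | m tab k es.
      valid_group_table m tab \<and> is_tree k es
      \<and> nontrivial_hom (table_group m tab) (aut_group k es)}"

end

theory Submission
  imports Defs
begin

text \<open>For \<open>n \<noteq> 1\<close> every automorphism of the star with centre 0 and leaves \<open>1, \<dots>, n\<close>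
  fixes the centre, so the automorphism group of the star is \<open>sym_group n\<close> itself: same
  carrier, composition and unit.  Replacing the unary part \<open>n\<close> of a permutation instance by
  this star therefore preserves the answer.  The replacement is computed by a RAM program in
  time linear in the input length: it locates the end of the table by computing \<open>1 + m\<^sup>2\<close>
  with additions, giving up as soon as the sum exceeds the input length, since \<open>m\<close> itself may
  be exponential in the input size.\<close>

section \<open>Stars and their automorphisms\<close>

definition star :: "nat \<Rightarrow> (nat \<times> nat) list" where
  "star n = map (\<lambda>i. (0, i)) [1..<n + 1]"

lemma adj_star:
  "adj (star n) u v \<longleftrightarrow> (u = 0 \<and> 1 \<le> v \<and> v \<le> n) \<or> (v = 0 \<and> 1 \<le> u \<and> u \<le> n)"
  by (auto simp: adj_def star_def)

lemma graph_connected_star: "graph_connected (n + 1) (star n)"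
  unfolding graph_connected_def
proof (intro allI impI)
  fix u v assume "u < n + 1" "v < n + 1"
  then have "(adj (star n))\<^sup>*\<^sup>* u 0" "(adj (star n))\<^sup>*\<^sup>* 0 v"
    by (cases "u = 0"; cases "v = 0"; auto simp: adj_star intro: r_into_rtranclp)+
  then show "(adj (star n))\<^sup>*\<^sup>* u v" by (rule rtranclp_trans)
qed

lemma not_has_cycle_star: "\<not> has_cycle (star n)"
proof
  assume "has_cycle (star n)"
  then obtain vs where len: "length vs \<ge> 3" and dist: "distinct vs"
    and path: "\<forall>i. Suc i < length vs \<longrightarrow> adj (star n) (vs ! i) (vs ! Suc i)"
    and close: "adj (star n) (last vs) (hd vs)"
    unfolding has_cycle_def by blast
  have "adj (star n) (vs ! 0) (vs ! 1)" "adj (star n) (vs ! 1) (vs ! 2)"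
    using path len by (auto simp: numeral_2_eq_2)
  moreover have "vs ! 0 \<noteq> vs ! 1" "vs ! 0 \<noteq> vs ! 2" "vs ! 1 \<noteq> vs ! 2"
  proof -
    have "\<forall>i<length vs. \<forall>j<length vs. i \<noteq> j \<longrightarrow> vs ! i \<noteq> vs ! j"
      using dist by (simp add: distinct_conv_nth)
    moreover have "0 < length vs" "1 < length vs" "2 < length vs" using len by auto
    ultimately show "vs ! 0 \<noteq> vs ! 1" "vs ! 0 \<noteq> vs ! 2" "vs ! 1 \<noteq> vs ! 2"
      by simp_all
  qed
  ultimately have centre: "vs ! 1 = 0" "vs ! 0 \<noteq> 0"
    by (auto simp: adj_star)
  have "vs \<noteq> []" using len by auto
  then have "hd vs = vs ! 0" "last vs = vs ! (length vs - 1)"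
    by (simp_all add: hd_conv_nth last_conv_nth)
  with close centre have "vs ! (length vs - 1) = vs ! 1"
    by (auto simp: adj_star)
  then show False
    using len nth_eq_iff_index_eq[OF dist] by auto
qed

lemma is_tree_star: "is_tree (n + 1) (star n)"
  using graph_connected_star not_has_cycle_star
  by (auto simp: is_tree_def star_def)

lemma aut_group_star_fixes_centre:
  assumes "n \<noteq> 1" "p \<in> carrier (aut_group (n + 1) (star n))"
  shows "p 0 = 0"
proof -
  have perm: "p permutes {0..<n + 1}"
    and aut: "\<And>u v. adj (star n) u v \<longleftrightarrow> adj (star n) (p u) (p v)"
    using assms(2) by (auto simp: aut_group_def)
  show ?thesis
  proof (cases "n = 0")
    case True
    then show ?thesis using perm by simp
  next
    case False
    with assms(1) have "2 \<le> n" by simp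
    show ?thesis
    proof (rule ccontr)
      assume "p 0 \<noteq> 0"
      moreover have "adj (star n) (p 0) (p 1)" "adj (star n) (p 0) (p 2)"
        using aut[of 0 1] aut[of 0 2] \<open>2 \<le> n\<close> by (auto simp: adj_star)
      ultimately have "p 1 = p 2" by (auto simp: adj_star)
      then show False using permutes_inj[OF perm] by (auto dest: injD)
    qed
  qed
qed

lemma carrier_aut_group_star:
  assumes "n \<noteq> 1"
  shows "carrier (aut_group (n + 1) (star n)) = carrier (sym_group n)"
proof (rule Set.set_eqI, rule iffI)
  fix p assume p: "p \<in> carrier (aut_group (n + 1) (star n))"
  then have perm: "p permutes {0..<n + 1}"
    by (simp add: aut_group_def)
  have "p 0 = 0"
    using aut_group_star_fixes_centre[OF assms p] .
  have "p permutes {1..n}"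
  proof (rule permutes_superset[OF perm])
    fix x assume "x \<in> {0..<n + 1} - {1..n}"
    then have "x = 0" by auto
    with \<open>p 0 = 0\<close> show "p x = x" by simp
  qed
  then show "p \<in> carrier (sym_group n)" by (simp add: sym_group_def)
next
  fix p assume "p \<in> carrier (sym_group n)"
  then have perm: "p permutes {1..n}" by (simp add: sym_group_def)
  have in_leaves: "1 \<le> p x \<and> p x \<le> n \<longleftrightarrow> 1 \<le> x \<and> x \<le> n" for x
    using permutes_in_image[OF perm] by simp
  have fixes_centre: "p x = 0 \<longleftrightarrow> x = 0" for x
    using permutes_not_in[OF perm, of 0] permutes_inj[OF perm]
    by (metis atLeastAtMost_iff injD not_one_le_zero)
  have "adj (star n) u v \<longleftrightarrow> adj (star n) (p u) (p v)" for u v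
    unfolding adj_star using in_leaves[of u] in_leaves[of v] fixes_centre[of u] fixes_centre[of v]
    by argo
  moreover have "p permutes {0..<n + 1}"
    by (rule permutes_subset[OF perm]) auto
  ultimately show "p \<in> carrier (aut_group (n + 1) (star n))"
    by (simp add: aut_group_def)
qed

text \<open>A single edge has a nontrivial automorphism although \<open>S\<^sub>1\<close> is trivial, so one
  leaf is replaced by none.\<close>

definition leaves :: "nat \<Rightarrow> nat" where
  "leaves n = (if n = 1 then 0 else n)"

lemma leaves_le: "leaves n \<le> n"
  by (simp add: leaves_def)

lemma carrier_aut_group_star_leaves:
  "carrier (aut_group (leaves n + 1) (star (leaves n))) = carrier (sym_group n)"
proof (cases "n = 1")
  case True
  have "carrier (sym_group 1) = carrier (sym_group 0)"
    by (simp add: sym_group_def)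
  with True show ?thesis
    using carrier_aut_group_star[of 0] by (simp add: leaves_def)
next
  case False
  then show ?thesis using carrier_aut_group_star by (simp add: leaves_def)
qed

lemma nontrivial_hom_cong:
  assumes "carrier H = carrier H'" "mult H = mult H'" "one H = one H'"
  shows "nontrivial_hom G H \<longleftrightarrow> nontrivial_hom G H'"
  using assms unfolding nontrivial_hom_def hom_def by simp

lemma nontrivial_hom_sym_group_iff_star:
  "nontrivial_hom G (sym_group n) \<longleftrightarrow> nontrivial_hom G (aut_group (leaves n + 1) (star (leaves n)))"
  by (rule nontrivial_hom_cong[OF carrier_aut_group_star_leaves[symmetric]])
    (simp_all add: sym_group_def aut_group_def)

section \<open>The reduction on encoded instances\<close>

text \<open>On \<open>enc_perm m tab n\<close> the first \<open>1 + m * m\<close> words are \<open>m\<close> and the table, and \<open>n\<close> is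
  the number of words after them.\<close>

definition reduction :: "nat list \<Rightarrow> nat list" where
  "reduction xs =
     (if xs = [] \<or> hd xs = 0 \<or> length xs < 1 + hd xs * hd xs then xs
      else let P = 1 + hd xs * hd xs; n = leaves (length xs - P)
           in take P xs @ [n + 1] @ concat (map (\<lambda>i. [0, i]) [1..<n + 1]))"

lemma valid_group_table_pos: "valid_group_table m tab \<Longrightarrow> 1 \<le> m"
  using monoid.one_closed[OF group.is_monoid, of "table_group m tab"]
  by (simp add: valid_group_table_def table_group_def)

lemma concat_pairs_inj:
  "concat (map (\<lambda>(u, v). [u, v]) es) = concat (map (\<lambda>(u, v). [u, v]) es') \<Longrightarrow> es = es'"
proof (induction es arbitrary: es')
  case Nil
  then show ?case by (cases es') auto
next
  case (Cons e es)
  then show ?case by (cases es'; cases e) auto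
qed

lemma enc_perm_inj:
  assumes "enc_perm m tab n = enc_perm m' tab' n'" "length tab = m * m" "length tab' = m' * m'"
  shows "m = m' \<and> tab = tab' \<and> n = n'"
  using assms unfolding enc_perm_def by (metis append_eq_append_conv length_replicate list.inject)

lemma enc_tree_inj:
  assumes "enc_tree m tab k es = enc_tree m' tab' k' es'" "length tab = m * m" "length tab' = m' * m'"
  shows "m = m' \<and> tab = tab' \<and> k = k' \<and> es = es'"
  using assms concat_pairs_inj unfolding enc_tree_def by (metis append_eq_append_conv list.inject)

lemma reduction_enc_perm:
  assumes "valid_group_table m tab"
  shows "reduction (enc_perm m tab n) = enc_tree m tab (leaves n + 1) (star (leaves n))"
proof -
  have "1 \<le> m" "length tab = m * m"
    using assms valid_group_table_pos by (auto simp: valid_group_table_def)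
  moreover have "concat (map (\<lambda>(u, v). [u, v]) (star k)) = concat (map (\<lambda>i. [0, i]) [1..<k + 1])" for k
    by (simp add: star_def o_def)
  ultimately show ?thesis
    by (simp add: reduction_def enc_perm_def enc_tree_def Let_def)
qed

lemma PermRep_yes_iff:
  assumes "valid_group_table m tab"
  shows "enc_perm m tab n \<in> PermRep_yes \<longleftrightarrow> nontrivial_hom (table_group m tab) (sym_group n)"
  using assms enc_perm_inj unfolding PermRep_yes_def valid_group_table_def by blast

lemma TreeRep_yes_iff:
  assumes "valid_group_table m tab"
  shows "enc_tree m tab k es \<in> TreeRep_yes \<longleftrightarrow>
    is_tree k es \<and> nontrivial_hom (table_group m tab) (aut_group k es)"
  using assms enc_tree_inj unfolding TreeRep_yes_def valid_group_table_def by blast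

lemma reduction_correct:
  assumes "xs \<in> PermRep_instances"
  shows "reduction xs \<in> TreeRep_instances \<and> (xs \<in> PermRep_yes \<longleftrightarrow> reduction xs \<in> TreeRep_yes)"
proof -
  from assms obtain m tab n where xs: "xs = enc_perm m tab n" and valid: "valid_group_table m tab"
    unfolding PermRep_instances_def by blast
  let ?T = "enc_tree m tab (leaves n + 1) (star (leaves n))"
  have is_instance: "?T \<in> TreeRep_instances"
    unfolding TreeRep_instances_def using valid is_tree_star by blast
  have "xs \<in> PermRep_yes \<longleftrightarrow> nontrivial_hom (table_group m tab) (sym_group n)"
    unfolding xs by (rule PermRep_yes_iff[OF valid])
  also have "\<dots> \<longleftrightarrow> nontrivial_hom (table_group m tab) (aut_group (leaves n + 1) (star (leaves n)))"
    by (rule nontrivial_hom_sym_group_iff_star)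
  also have "\<dots> \<longleftrightarrow> ?T \<in> TreeRep_yes"
    using TreeRep_yes_iff[OF valid] is_tree_star by simp
  finally show ?thesis
    using is_instance unfolding xs reduction_enc_perm[OF valid] by simp
qed

section \<open>Runs and the memory layout of the program\<close>

lemma run_0 [simp]: "run p 0 c = c"
  by (simp add: run_def)

lemma run_Suc: "run p (Suc t) c = run p t (step p c)"
  unfolding run_def funpow_Suc_right by simp

lemma run_numeral: "run p (numeral k) c = run p (pred_numeral k) (step p c)"
  by (simp add: numeral_eq_Suc run_Suc)

lemma run_add: "run p (s + t) c = run p t (run p s c)"
  unfolding run_def by (metis funpow_add add.commute comp_apply)

lemma run_trans: "run p s c = c' \<Longrightarrow> run p t c' = c'' \<Longrightarrow> run p (s + t) c = c''"
  by (simp add: run_add)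

text \<open>The program uses cells 0--11 as registers.  To free cells 1--11, which belong to
  the input and output, it saves them at \<open>E + 1, \<dots>, E + 11\<close>, where \<open>E = 12 L + m\<close>
  exceeds every other cell it touches (\<open>L\<close> is the input length, \<open>m\<close> the first word).
  Cell \<open>E\<close> itself ends up holding the output length.\<close>

definition phys_addr :: "nat \<Rightarrow> nat \<Rightarrow> nat" where
  "phys_addr E a = (if a \<le> 11 then E + a else a)"

definition represents :: "nat \<Rightarrow> (nat \<Rightarrow> nat) \<Rightarrow> (nat \<Rightarrow> nat) \<Rightarrow> bool" where
  "represents E M W \<longleftrightarrow> (\<forall>a. 1 \<le> a \<longrightarrow> a < E \<longrightarrow> M (phys_addr E a) = W a)"

lemma phys_addr_ne_reg [simp]:
  "11 < E \<Longrightarrow> r \<le> 11 \<Longrightarrow> phys_addr E a \<noteq> r"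
  "11 < E \<Longrightarrow> r \<le> 11 \<Longrightarrow> r \<noteq> phys_addr E a"
  by (auto simp: phys_addr_def)

lemma represents_update_reg [simp]:
  "r \<le> 11 \<Longrightarrow> 11 < E \<Longrightarrow> represents E (M(r := x)) W \<longleftrightarrow> represents E M W"
  unfolding represents_def phys_addr_def by auto

lemma represents_update_base [simp]: "represents E (M(E := x)) W \<longleftrightarrow> represents E M W"
  unfolding represents_def phys_addr_def by auto

lemma represents_update_zero [simp]: "represents E M (W(0 := x)) \<longleftrightarrow> represents E M W"
  unfolding represents_def by auto

lemma represents_update:
  "represents E M W \<Longrightarrow> 1 \<le> a \<Longrightarrow> a < E \<Longrightarrow> represents E (M(phys_addr E a := x)) (W(a := x))"
  unfolding represents_def phys_addr_def by auto

lemma represents_store: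
  assumes "represents E M W" "1 \<le> q" "q < E" "11 < E"
  shows "represents E (M(2 := t, phys_addr E q := x)) (W(q := x))"
  using assms represents_update[of E "M(2 := t)"] by simp

lemma represents_intro:
  assumes "\<And>a. a \<in> {1, 2, 3, 4, 5, 6, 7, 8, 9, 10, 11} \<Longrightarrow> M (E + a) = W a"
    and "\<And>a. 11 < a \<Longrightarrow> a < E \<Longrightarrow> M a = W a"
  shows "represents E M W"
  unfolding represents_def phys_addr_def
proof (intro allI impI)
  fix a :: nat assume "1 \<le> a" "a < E"
  show "M (if a \<le> 11 then E + a else a) = W a"
  proof (cases "a \<le> 11")
    case True
    with \<open>1 \<le> a\<close> have "a \<in> {1, 2, 3, 4, 5, 6, 7, 8, 9, 10, 11}"
      by (auto simp: le_Suc_eq numeral_eq_Suc)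
    with True show ?thesis using assms(1) by simp
  next
    case False
    with \<open>a < E\<close> show ?thesis using assms(2) by simp
  qed
qed

section \<open>The program and its blocks\<close>

definition store_logical :: "nat \<Rightarrow> nat \<Rightarrow> instr list" where
  "store_logical pc r =
     [Const 2 11, Sub 2 8 2, Jz 2 (pc + 5), Store 8 r, Jmp (pc + 7), Add 2 0 8, Store 2 r]"

text \<open>With \<open>L\<close> the input length and \<open>m\<close> the first word, the program halts at once unless
  \<open>m \<ge> 1\<close>; otherwise it sets cell 0 to \<open>E\<close> (pc 1--13), saves cells 1--11, recovering \<open>m\<close>
  as \<open>E - 12 L\<close> (pc 14--46), computes \<open>P = 1 + m\<^sup>2\<close> in cell 5 by repeated addition, leaving
  for pc 96 as soon as it exceeds \<open>L\<close> (pc 47--56), puts \<open>c = leaves (L - P)\<close> into cell 7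
  (pc 57--62), writes \<open>c + 1\<close> and then the pairs \<open>0, j\<close> for \<open>j = 1, \<dots>, c\<close> behind the first
  \<open>P\<close> words (pc 63--93), stores the output length at \<open>E\<close> (pc 94--96) and restores cells 0--11
  (pc 97--130).  The block \<open>store_logical pc r\<close> writes register \<open>r\<close> to the logical cell
  named by register 8.\<close>

definition prog :: "instr list" where
  "prog =
     [Jz 1 131,
      Add 0 0 1, Sub 1 0 1, Add 0 0 1, Add 0 0 1, Add 0 0 1, Add 0 0 1, Add 0 0 1, Add 0 0 1,
      Add 0 0 1, Add 0 0 1, Add 0 0 1, Add 0 0 1, Add 0 0 1,
      Store 0 2, Const 2 3, Add 2 0 2, Store 2 3, Const 3 1,
      Add 2 2 3, Store 2 4, Add 2 2 3, Store 2 5, Add 2 2 3, Store 2 6, Add 2 2 3, Store 2 7,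
      Add 2 2 3, Store 2 8, Add 2 2 3, Store 2 9, Add 2 2 3, Store 2 10, Add 2 2 3, Store 2 11,
      Load 4 0, Const 2 2, Add 2 0 2, Store 2 4,
      Add 4 1 1, Add 4 4 4, Add 7 4 4, Add 4 4 7, Sub 4 0 4,
      Const 2 1, Add 2 0 2, Store 2 4,
      Const 11 0, Const 5 1, Add 6 4 11,
      Jz 6 57, Add 5 5 4, Sub 7 5 1, Jz 7 55, Jmp 96, Sub 6 6 3, Jmp 50,
      Sub 7 1 5, Jz 7 63, Sub 2 7 3, Jz 2 62, Jmp 63, Const 7 0,
      Add 8 5 3, Add 9 7 3] @
     store_logical 65 9 @
     [Const 9 1, Add 10 7 11,
      Jz 10 94, Add 8 8 3] @
     store_logical 76 11 @
     [Add 8 8 3] @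
     store_logical 84 9 @
     [Add 9 9 3, Sub 10 10 3, Jmp 74,
      Store 0 8, Jmp 97,
      Store 0 1,
      Const 1 1, Add 1 0 1, Const 2 2, Add 2 0 2, Const 3 3, Add 3 0 3, Const 4 4, Add 4 0 4,
      Const 5 5, Add 5 0 5, Const 6 6, Add 6 0 6, Const 7 7, Add 7 0 7, Const 8 8, Add 8 0 8,
      Const 9 9, Add 9 0 9, Const 10 10, Add 10 0 10, Const 11 11, Add 11 0 11,
      Load 1 1, Load 2 2, Load 3 3, Load 4 4, Load 5 5, Load 6 6, Load 7 7, Load 8 8,
      Load 9 9, Load 10 10, Load 11 11, Load 0 0]"

lemma length_prog: "length prog = 131"
  by (simp add: prog_def store_logical_def)

lemma step_prog: "pc < length prog \<Longrightarrow> step prog (pc, M) = exec_instr (prog ! pc) (pc, M)"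
  by (simp add: step_def)

lemmas nth_prog =
  arg_cong[where f = "\<lambda>p. p ! i", OF prog_def[unfolded store_logical_def append_Cons append_Nil]]
  for i

lemmas exec_prog = run_numeral run_Suc step_prog length_prog nth_prog

lemma run_compute_base:
  "M 1 \<noteq> 0 \<Longrightarrow> run prog 14 (0, M) = (14, M(0 := 12 * M 0 + M 1, 1 := M 0))"
  by (simp add: exec_prog fun_upd_twist) (rule ext, simp)

lemma run_save_registers:
  assumes "M 0 = E" "M 1 = L" "11 < E"
  shows "\<exists>M'. run prog 36 (14, M) = (50, M') \<and> M' 0 = E \<and> M' 1 = L \<and> M' 3 = 1
    \<and> M' 4 = E - 12 * L \<and> M' 5 = 1 \<and> M' 6 = E - 12 * L \<and> M' 11 = 0
    \<and> represents E M' (M(1 := E - 12 * L))"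
  using assms by (simp add: exec_prog) (intro conjI represents_intro; (elim insertE emptyE)?; simp)

lemma run_square_loop:
  assumes "11 < E" "1 \<le> m"
  shows "M 0 = E \<Longrightarrow> M 1 = L \<Longrightarrow> M 3 = 1 \<Longrightarrow> M 4 = m \<Longrightarrow> M 5 = P \<Longrightarrow> M 6 = i \<Longrightarrow> M 11 = 0
    \<Longrightarrow> represents E M W \<Longrightarrow> P \<le> L \<Longrightarrow>
    \<exists>t M'. t \<le> 7 * (L - P) + 7 \<and> run prog t (50, M) = (if P + i * m \<le> L then 57 else 96, M')
      \<and> M' 0 = E \<and> M' 1 = L \<and> M' 3 = 1 \<and> M' 11 = 0 \<and> represents E M' W
      \<and> (P + i * m \<le> L \<longrightarrow> M' 5 = P + i * m)"
proof (induction i arbitrary: M P)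
  case 0
  then have "run prog 1 (50, M) = (57, M)" by (simp add: exec_prog)
  with 0 show ?case by (intro exI[of _ 1] exI[of _ M]) simp
next
  case (Suc i)
  show ?case
  proof (cases "P + m \<le> L")
    case True
    have "\<exists>M'. run prog 6 (50, M) = (50, M') \<and> M' 0 = E \<and> M' 1 = L \<and> M' 3 = 1 \<and> M' 4 = m
       \<and> M' 5 = P + m \<and> M' 6 = i \<and> M' 11 = 0 \<and> represents E M' W"
      using Suc.prems True assms by (simp add: exec_prog)
    then obtain M' where run: "run prog 6 (50, M) = (50, M')" and M': "M' 0 = E" "M' 1 = L"
      "M' 3 = 1" "M' 4 = m" "M' 5 = P + m" "M' 6 = i" "M' 11 = 0" "represents E M' W"
      by blast
    obtain t M'' where t: "t \<le> 7 * (L - (P + m)) + 7"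
      and run': "run prog t (50, M') = (if P + m + i * m \<le> L then 57 else 96, M'')"
      and M'': "M'' 0 = E \<and> M'' 1 = L \<and> M'' 3 = 1 \<and> M'' 11 = 0 \<and> represents E M'' W
        \<and> (P + m + i * m \<le> L \<longrightarrow> M'' 5 = P + m + i * m)"
      using Suc.IH[OF M' True] by blast
    have "run prog (6 + t) (50, M) = (if P + Suc i * m \<le> L then 57 else 96, M'')"
      using run_trans[OF run run'] by (simp add: add.assoc)
    moreover have "6 + t \<le> 7 * (L - P) + 7"
      using t True assms by simp
    ultimately show ?thesis
      using M'' by (intro exI[of _ "6 + t"] exI[of _ M'']) (simp add: add.assoc)
  next
    case False
    have "\<exists>M'. run prog 5 (50, M) = (96, M') \<and> M' 0 = E \<and> M' 1 = L \<and> M' 3 = 1 \<and> M' 11 = 0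
       \<and> represents E M' W"
      using Suc.prems False assms by (simp add: exec_prog)
    then obtain M' where "run prog 5 (50, M) = (96, M')" "M' 0 = E" "M' 1 = L" "M' 3 = 1"
      "M' 11 = 0" "represents E M' W"
      by blast
    moreover have "\<not> P + Suc i * m \<le> L"
      using False by simp
    ultimately show ?thesis
      by (intro exI[of _ 5] exI[of _ M']) simp
  qed
qed

lemma run_count_leaves:
  assumes "M 0 = E" "M 1 = L" "M 3 = 1" "M 5 = P" "M 11 = 0" "represents E M W" "11 < E"
  shows "\<exists>t M'. t \<le> 5 \<and> run prog t (57, M) = (63, M') \<and> M' 0 = E \<and> M' 3 = 1 \<and> M' 5 = P
      \<and> M' 7 = leaves (L - P) \<and> M' 11 = 0 \<and> represents E M' W"
proof -
  consider "L - P = 0" | "L - P = 1" | "L - P \<noteq> 0 \<and> L - P \<noteq> 1" by blast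
  then show ?thesis
  proof cases
    case 1
    then have "run prog 2 (57, M) = (63, M(7 := L - P))"
      using assms by (simp add: exec_prog)
    with 1 assms show ?thesis
      by (intro exI[of _ 2] exI[of _ "M(7 := L - P)"]) (simp add: leaves_def)
  next
    case 2
    then have "run prog 5 (57, M) = (63, M(7 := 0, 2 := 0))"
      using assms by (simp add: exec_prog fun_upd_twist)
    with 2 assms show ?thesis
      by (intro exI[of _ 5] exI[of _ "M(7 := 0, 2 := 0)"]) (simp add: leaves_def)
  next
    case 3
    then have "L - P \<noteq> 0" "L - P - 1 \<noteq> 0" by auto
    then have "run prog 5 (57, M) = (63, M(7 := L - P, 2 := L - P - 1))"
      using assms by (simp add: exec_prog)
    with 3 assms show ?thesis
      by (intro exI[of _ 5] exI[of _ "M(7 := L - P, 2 := L - P - 1)"]) (simp add: leaves_def)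
  qed
qed

lemma run_store_logical:
  assumes "(pc, r) \<in> {(65, 9), (76, 11), (84, 9)}" "M 0 = E" "M 8 = q"
  shows "\<exists>t. run prog 5 (pc, M) = (pc + 7, M(2 := t, phys_addr E q := M r))"
  using assms by (cases "q \<le> 11") (auto simp: exec_prog phys_addr_def)

lemma run_write_vertex_count:
  assumes "M 0 = E" "M 1 = L" "M 3 = 1" "M 5 = P" "M 11 = 0" "represents E M W" "11 < E" "P + 1 < E"
  shows "\<exists>t M'. t \<le> 14 \<and> run prog t (57, M) = (74, M') \<and> M' 0 = E \<and> M' 3 = 1 \<and> M' 8 = P + 1
      \<and> M' 9 = 1 \<and> M' 10 = leaves (L - P) \<and> M' 11 = 0
      \<and> represents E M' (W(P + 1 := leaves (L - P) + 1))"
proof -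
  obtain t M1 where t: "t \<le> 5" and run1: "run prog t (57, M) = (63, M1)"
    and M1: "M1 0 = E" "M1 3 = 1" "M1 5 = P" "M1 7 = leaves (L - P)" "M1 11 = 0"
      "represents E M1 W"
    using run_count_leaves[OF assms(1-7)] by blast
  define M2 where "M2 = M1(8 := P + 1, 9 := leaves (L - P) + 1)"
  have run2: "run prog 2 (63, M1) = (65, M2)"
    using M1 by (simp add: exec_prog M2_def)
  obtain s where run3: "run prog 5 (65, M2) = (72, M2(2 := s, phys_addr E (P + 1) := M2 9))"
    using run_store_logical[of 65 9 M2 E "P + 1"] M1 by (auto simp: M2_def)
  define M3 where "M3 = M2(2 := s, phys_addr E (P + 1) := M2 9)"
  define M4 where "M4 = M3(9 := 1, 10 := M3 7 + M3 11)"
  have run4: "run prog 2 (72, M3) = (74, M4)"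
    by (simp add: exec_prog M4_def)
  have "represents E M3 (W(P + 1 := leaves (L - P) + 1))"
    unfolding M3_def using represents_store M1 assms by (simp add: M2_def)
  then have "represents E M4 (W(P + 1 := leaves (L - P) + 1))"
    using assms by (simp add: M4_def)
  moreover have "M4 0 = E \<and> M4 3 = 1 \<and> M4 8 = P + 1 \<and> M4 9 = 1 \<and> M4 10 = leaves (L - P)
     \<and> M4 11 = 0"
    using M1 assms by (simp add: M4_def M3_def M2_def)
  moreover have "run prog (t + 2 + 5 + 2) (57, M) = (74, M4)"
    using run_trans[OF run_trans[OF run_trans[OF run1 run2] run3[folded M3_def]] run4] .
  ultimately show ?thesis
    using t by (intro exI[of _ "t + 2 + 5 + 2"] exI[of _ M4]) simp
qed

fun write_edges :: "nat \<Rightarrow> nat \<Rightarrow> nat \<Rightarrow> (nat \<Rightarrow> nat) \<Rightarrow> (nat \<Rightarrow> nat)" where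
  "write_edges p j 0 W = W"
| "write_edges p j (Suc c) W = write_edges (p + 2) (j + 1) c (W(p + 1 := 0, p + 2 := j))"

lemma run_edge_pair:
  assumes "11 < E" "M 0 = E" "M 3 = 1" "M 8 = p" "M 9 = j" "M 10 = Suc c" "M 11 = 0"
    and "represents E M W" "1 \<le> p" "p + 2 < E"
  shows "\<exists>M'. run prog 16 (74, M) = (74, M') \<and> M' 0 = E \<and> M' 3 = 1 \<and> M' 8 = p + 2
    \<and> M' 9 = j + 1 \<and> M' 10 = c \<and> M' 11 = 0 \<and> represents E M' (W(p + 1 := 0, p + 2 := j))"
proof -
  define M1 where "M1 = M(8 := p + 1)"
  have run1: "run prog 2 (74, M) = (76, M1)"
    using assms by (simp add: exec_prog M1_def)
  obtain s1 where run2: "run prog 5 (76, M1) = (83, M1(2 := s1, phys_addr E (p + 1) := 0))"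
    using run_store_logical[of 76 11 M1 E "p + 1"] assms by (auto simp: M1_def)
  define M2 where "M2 = (M1(2 := s1, phys_addr E (p + 1) := 0))(8 := p + 2)"
  have run3: "run prog 1 (83, M1(2 := s1, phys_addr E (p + 1) := 0)) = (84, M2)"
    using assms by (simp add: exec_prog M2_def M1_def)
  obtain s2 where run4: "run prog 5 (84, M2) = (91, M2(2 := s2, phys_addr E (p + 2) := j))"
    using run_store_logical[of 84 9 M2 E "p + 2"] assms by (auto simp: M2_def M1_def)
  define M3 where "M3 = (M2(2 := s2, phys_addr E (p + 2) := j))(9 := j + 1, 10 := c)"
  have run5: "run prog 3 (91, M2(2 := s2, phys_addr E (p + 2) := j)) = (74, M3)"
    using assms by (simp add: exec_prog M3_def M2_def M1_def)
  have "represents E M1 W"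
    using assms by (simp add: M1_def)
  then have "represents E (M1(2 := s1, phys_addr E (p + 1) := 0)) (W(p + 1 := 0))"
    using assms by (intro represents_store) simp_all
  then have "represents E M2 (W(p + 1 := 0))"
    using assms by (simp add: M2_def)
  then have "represents E (M2(2 := s2, phys_addr E (p + 2) := j)) (W(p + 1 := 0, p + 2 := j))"
    using assms by (intro represents_store) simp_all
  then have "represents E M3 (W(p + 1 := 0, p + 2 := j))"
    using assms by (simp add: M3_def)
  moreover have "M3 0 = E \<and> M3 3 = 1 \<and> M3 8 = p + 2 \<and> M3 9 = j + 1 \<and> M3 10 = c \<and> M3 11 = 0"
    using assms by (simp add: M3_def M2_def M1_def)
  moreover have "run prog 16 (74, M) = (74, M3)"
    using run_trans[OF run_trans[OF run_trans[OF run_trans[OF run1 run2] run3] run4] run5] by simp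
  ultimately show ?thesis by blast
qed

lemma run_edge_loop:
  assumes "11 < E"
  shows "M 0 = E \<Longrightarrow> M 3 = 1 \<Longrightarrow> M 8 = p \<Longrightarrow> M 9 = j \<Longrightarrow> M 10 = c \<Longrightarrow> M 11 = 0
    \<Longrightarrow> represents E M W \<Longrightarrow> 1 \<le> p \<Longrightarrow> p + 2 * c < E \<Longrightarrow>
    \<exists>t M'. t \<le> 16 * c + 1 \<and> run prog t (74, M) = (94, M') \<and> M' 0 = E \<and> M' 8 = p + 2 * c
       \<and> represents E M' (write_edges p j c W)"
proof (induction c arbitrary: M p j W)
  case 0
  then have "run prog 1 (74, M) = (94, M)" by (simp add: exec_prog)
  with 0 show ?case by (intro exI[of _ 1] exI[of _ M]) simp
next
  case (Suc c)
  have bounds: "p + 2 < E" "1 \<le> p + 2" "p + 2 + 2 * c < E"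
    using Suc.prems(9) by simp_all
  obtain M' where run: "run prog 16 (74, M) = (74, M')"
    and M': "M' 0 = E" "M' 3 = 1" "M' 8 = p + 2" "M' 9 = j + 1" "M' 10 = c" "M' 11 = 0"
      "represents E M' (W(p + 1 := 0, p + 2 := j))"
    using run_edge_pair[OF assms Suc.prems(1-8) bounds(1)] by blast
  obtain t M'' where t: "t \<le> 16 * c + 1" and run': "run prog t (74, M') = (94, M'')"
    and M'': "M'' 0 = E \<and> M'' 8 = p + 2 + 2 * c
      \<and> represents E M'' (write_edges (p + 2) (j + 1) c (W(p + 1 := 0, p + 2 := j)))"
    using Suc.IH[OF M' bounds(2,3)] by blast
  with run_trans[OF run run'] show ?case
    by (intro exI[of _ "16 + t"] exI[of _ M'']) simp
qed

lemma run_store_output_length: "M 0 = E \<Longrightarrow> run prog 2 (94, M) = (97, M(E := M 8))"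
  by (simp add: exec_prog)

lemma run_store_input_length: "M 0 = E \<Longrightarrow> run prog 1 (96, M) = (97, M(E := M 1))"
  by (simp add: exec_prog)

lemma run_restore_registers:
  assumes "M 0 = E" "11 < E" "represents E M W" "M E < E"
  shows "\<exists>M'. run prog 34 (97, M) = (131, M') \<and> output_of (131, M') = map (\<lambda>i. W (Suc i)) [0..<M E]"
proof -
  have "\<exists>M'. run prog 34 (97, M) = (131, M') \<and> M' 0 = M E \<and> represents E M M'"
    using assms(1,2) by (simp add: exec_prog) (intro represents_intro; (elim insertE emptyE)?; simp)
  then obtain M' where run: "run prog 34 (97, M) = (131, M')" and M'0: "M' 0 = M E"
    and restored: "represents E M M'"
    by blast
  have "M' (Suc i) = W (Suc i)" if "i < M E" for i
    using restored assms(3,4) that by (simp add: represents_def)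
  then have "output_of (131, M') = map (\<lambda>i. W (Suc i)) [0..<M E]"
    by (simp add: output_of_def M'0)
  with run show ?thesis by blast
qed

lemma write_edges_eq:
  "write_edges p j c W a =
    (if p < a \<and> a \<le> p + 2 * c then (if odd (a - p) then 0 else j + (a - p) div 2 - 1) else W a)"
proof (induction c arbitrary: p j W)
  case 0
  then show ?case by simp
next
  case (Suc c)
  show ?case
  proof (cases "a = p + 1 \<or> a = p + 2")
    case True
    then show ?thesis by (auto simp: Suc.IH)
  next
    case False
    then have "write_edges p j (Suc c) W a =
      (if p + 2 < a \<and> a \<le> p + 2 + 2 * c then (if odd (a - (p + 2)) then 0
       else j + 1 + (a - (p + 2)) div 2 - 1) else W a)"
      by (simp add: Suc.IH)
    also have "\<dots> = (if p < a \<and> a \<le> p + 2 * Suc c then (if odd (a - p) then 0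
       else j + (a - p) div 2 - 1) else W a)"
    proof (cases "p + 2 < a")
      case True
      define d where "d = a - (p + 2)"
      with True have d: "a = p + 2 + d" by simp
      then have "a - p = d + 2" by simp
      with True d show ?thesis by auto
    next
      case False
      with \<open>\<not> (a = p + 1 \<or> a = p + 2)\<close> have "\<not> p < a" by linarith
      with False show ?thesis by simp
    qed
    finally show ?thesis .
  qed
qed

lemma concat_edge_pairs:
  "concat (map (\<lambda>i. [0, i]) [1..<c + 1]) = map (\<lambda>q. if even q then 0 else (q + 1) div 2) [0..<2 * c]"
proof (induction c)
  case 0
  then show ?case by simp
next
  case (Suc c)
  have "[0..<2 * Suc c] = [0..<2 * c] @ [2 * c, 2 * c + 1]"
    by (simp add: numeral_2_eq_2)
  with Suc show ?case by simp
qed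

lemma output_of_init: "output_of (pc, snd (init_config xs)) = xs"
  by (rule nth_equalityI) (simp_all add: output_of_def init_config_def)

lemma map_write_edges:
  assumes "P \<le> length xs" and "\<And>a. 1 \<le> a \<Longrightarrow> a \<le> length xs \<Longrightarrow> W a = xs ! (a - 1)"
  shows "map (\<lambda>i. write_edges (P + 1) 1 c (W(P + 1 := c + 1)) (Suc i)) [0..<P + 1 + 2 * c]
     = take P xs @ [c + 1] @ concat (map (\<lambda>i. [0, i]) [1..<c + 1])"
  unfolding concat_edge_pairs
proof (rule nth_equalityI)
  fix i
  let ?l = "map (\<lambda>i. write_edges (P + 1) 1 c (W(P + 1 := c + 1)) (Suc i)) [0..<P + 1 + 2 * c]"
  let ?r = "take P xs @ [c + 1] @ map (\<lambda>q. if even q then 0 else (q + 1) div 2) [0..<2 * c]"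
  assume "i < length ?l"
  then have i: "i < P + 1 + 2 * c" by simp
  consider "i < P" | "i = P" | "P < i" by linarith
  then show "?l ! i = ?r ! i"
  proof cases
    case 1
    with i assms show ?thesis by (simp add: write_edges_eq nth_append del: upt_Suc)
  next
    case 2
    with i assms(1) show ?thesis by (simp add: write_edges_eq nth_append del: upt_Suc)
  next
    case 3
    define q where "q = i - (P + 1)"
    with 3 have "i = P + 1 + q" "Suc i - (P + 1) = Suc q" by simp_all
    with i assms(1) show ?thesis by (simp add: write_edges_eq nth_append del: upt_Suc)
  qed
qed (use assms(1) in simp)

lemma run_setup:
  assumes "xs \<noteq> []" "hd xs \<noteq> 0"
  defines "E \<equiv> 12 * length xs + hd xs"
  shows "\<exists>M. run prog 50 (init_config xs) = (50, M) \<and> M 0 = E \<and> M 1 = length xs \<and> M 3 = 1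
    \<and> M 4 = hd xs \<and> M 5 = 1 \<and> M 6 = hd xs \<and> M 11 = 0 \<and> represents E M (snd (init_config xs))"
proof -
  define I where "I = snd (init_config xs)"
  have init: "init_config xs = (0, I)" and I0: "I 0 = length xs" and I1: "I 1 = hd xs"
    using assms(1) by (auto simp: I_def init_config_def hd_conv_nth Suc_le_eq)
  have run1: "run prog 14 (init_config xs) = (14, I(0 := E, 1 := length xs))"
    using run_compute_base[of I] I0 I1 assms(2) by (simp add: init E_def)
  have "1 \<le> length xs"
    using assms(1) by (cases xs) auto
  then have "11 < E" "E - 12 * length xs = hd xs"
    using assms(2) by (simp_all add: E_def)
  then obtain M where run2: "run prog 36 (14, I(0 := E, 1 := length xs)) = (50, M)"
    and M: "M 0 = E" "M 1 = length xs" "M 3 = 1" "M 4 = hd xs" "M 5 = 1" "M 6 = hd xs" "M 11 = 0"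
      "represents E M ((I(0 := E, 1 := length xs))(1 := hd xs))"
    using run_save_registers[of "I(0 := E, 1 := length xs)" E "length xs"] by auto
  have "(I(0 := E, 1 := length xs))(1 := hd xs) = I(0 := E)"
    using I1 by auto
  with M have "represents E M I" by simp
  with run_trans[OF run1 run2] M show ?thesis
    unfolding I_def by (intro exI[of _ M]) simp
qed

lemma run_write_star:
  assumes "M 0 = E" "M 1 = L" "M 3 = 1" "M 5 = P" "M 11 = 0" "represents E M W" "11 < E"
    and "1 \<le> P" "P + 1 + 2 * leaves (L - P) < E"
  defines "c \<equiv> leaves (L - P)"
  shows "\<exists>t M'. t \<le> 16 * c + 17 \<and> run prog t (57, M) = (97, M') \<and> M' 0 = E
      \<and> M' E = P + 1 + 2 * c \<and> represents E M' (write_edges (P + 1) 1 c (W(P + 1 := c + 1)))"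
proof -
  obtain t1 M1 where t1: "t1 \<le> 14" and run1: "run prog t1 (57, M) = (74, M1)"
    and M1: "M1 0 = E" "M1 3 = 1" "M1 8 = P + 1" "M1 9 = 1" "M1 10 = c" "M1 11 = 0"
      "represents E M1 (W(P + 1 := c + 1))"
    using run_write_vertex_count[OF assms(1-7)] assms(9) unfolding c_def by auto
  obtain t2 M2 where t2: "t2 \<le> 16 * c + 1" and run2: "run prog t2 (74, M1) = (94, M2)"
    and M2: "M2 0 = E" "M2 8 = P + 1 + 2 * c"
      "represents E M2 (write_edges (P + 1) 1 c (W(P + 1 := c + 1)))"
    using run_edge_loop[OF assms(7) M1(1-6) M1(7)] assms(9) unfolding c_def by auto
  have run3: "run prog 2 (94, M2) = (97, M2(E := P + 1 + 2 * c))"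
    using run_store_output_length[of M2 E] M2 by simp
  from t1 t2 run_trans[OF run_trans[OF run1 run2] run3] M2 assms(7) show ?thesis
    by (intro exI[of _ "t1 + t2 + 2"] exI[of _ "M2(E := P + 1 + 2 * c)"]) simp
qed

lemma run_copy_input:
  assumes "M 0 = E" "M 1 = L" "M 3 = 1" "M 4 = m" "M 5 = 1" "M 6 = m" "M 11 = 0"
    and "represents E M W" "11 < E" "1 \<le> m" "1 \<le> L" "L < E" "L < 1 + m * m"
  shows "\<exists>t M'. t \<le> 7 * L + 35 \<and> run prog t (50, M) = (131, M')
    \<and> output_of (131, M') = map (\<lambda>i. W (Suc i)) [0..<L]"
proof -
  obtain t1 M1 where t1: "t1 \<le> 7 * (L - 1) + 7" and run1: "run prog t1 (50, M) = (96, M1)"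
    and M1: "M1 0 = E" "M1 1 = L" "represents E M1 W"
    using run_square_loop[OF assms(9,10,1-8)] assms(11,13) by auto
  have run2: "run prog 1 (96, M1) = (97, M1(E := L))"
    using run_store_input_length[of M1 E] M1 by simp
  obtain M2 where run3: "run prog 34 (97, M1(E := L)) = (131, M2)"
    and out: "output_of (131, M2) = map (\<lambda>i. W (Suc i)) [0..<L]"
    using run_restore_registers[of "M1(E := L)" E W] M1 assms(9,12) by auto
  have "t1 + 1 + 34 \<le> 7 * L + 35"
    using t1 assms(11) by simp
  with run_trans[OF run_trans[OF run1 run2] run3] out show ?thesis
    by blast
qed

lemma run_build_star:
  assumes "M 0 = E" "M 1 = L" "M 3 = 1" "M 4 = m" "M 5 = 1" "M 6 = m" "M 11 = 0"
    and "represents E M W" "11 < E" "1 \<le> m" "2 * L < E" "1 + m * m \<le> L"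
  defines "P \<equiv> 1 + m * m"
  defines "c \<equiv> leaves (L - P)"
  shows "\<exists>t M'. t \<le> 23 * L + 51 \<and> run prog t (50, M) = (131, M') \<and> output_of (131, M') =
    map (\<lambda>i. write_edges (P + 1) 1 c (W(P + 1 := c + 1)) (Suc i)) [0..<P + 1 + 2 * c]"
proof -
  obtain t1 M1 where t1: "t1 \<le> 7 * (L - 1) + 7" and run1: "run prog t1 (50, M) = (57, M1)"
    and M1: "M1 0 = E" "M1 1 = L" "M1 3 = 1" "M1 11 = 0" "represents E M1 W" "M1 5 = P"
    using run_square_loop[OF assms(9,10,1-8)] assms(12) unfolding P_def by auto
  have "c \<le> L - P"
    unfolding c_def by (rule leaves_le)
  then have bound: "P + 1 + 2 * c < E"
    using assms(11,12) unfolding P_def by linarith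
  obtain t2 M2 where t2: "t2 \<le> 16 * c + 17" and run2: "run prog t2 (57, M1) = (97, M2)"
    and M2: "M2 0 = E" "M2 E = P + 1 + 2 * c"
      "represents E M2 (write_edges (P + 1) 1 c (W(P + 1 := c + 1)))"
    using run_write_star[OF M1(1,2,3,6,4,5) assms(9)] bound unfolding c_def P_def by auto
  obtain M3 where run3: "run prog 34 (97, M2) = (131, M3)" and out: "output_of (131, M3) =
      map (\<lambda>i. write_edges (P + 1) 1 c (W(P + 1 := c + 1)) (Suc i)) [0..<P + 1 + 2 * c]"
    using run_restore_registers[OF M2(1) assms(9) M2(3)] M2(2) bound by auto
  have "t1 \<le> 7 * L"
    using t1 assms(12) by (cases L) auto
  then have "t1 + t2 + 34 \<le> 23 * L + 51"
    using t2 \<open>c \<le> L - P\<close> by linarith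
  with run_trans[OF run_trans[OF run1 run2] run3] out show ?thesis
    by blast
qed

lemma run_degenerate_input:
  "xs = [] \<or> hd xs = 0 \<Longrightarrow> run prog 1 (init_config xs) = (131, snd (init_config xs))"
  by (cases xs) (auto simp: init_config_def exec_prog)

lemma prog_computes_reduction:
  "\<exists>t \<le> 101 * (length xs + 1). halted prog (run prog t (init_config xs))
     \<and> output_of (run prog t (init_config xs)) = reduction xs"
proof (cases "xs = [] \<or> hd xs = 0")
  case True
  then show ?thesis
    using run_degenerate_input[OF True]
    by (intro exI[of _ 1]) (auto simp: halted_def length_prog output_of_init reduction_def)
next
  case False
  define L m I where "L = length xs" and "m = hd xs" and "I = snd (init_config xs)"
  define E where "E = 12 * L + m"
  have "1 \<le> L" "1 \<le> m"
    using False by (auto simp: L_def m_def Suc_le_eq)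
  then have E: "11 < E" "2 * L < E" "L < E"
    by (simp_all add: E_def)
  obtain M where run1: "run prog 50 (init_config xs) = (50, M)"
    and M: "M 0 = E" "M 1 = L" "M 3 = 1" "M 4 = m" "M 5 = 1" "M 6 = m" "M 11 = 0" "represents E M I"
    using run_setup[of xs] False unfolding E_def L_def m_def I_def by auto
  have halted: "halted prog (131, M')" for M'
    by (simp add: halted_def length_prog)
  show ?thesis
  proof (cases "1 + m * m \<le> L")
    case True
    define P c where "P = 1 + m * m" and "c = leaves (L - P)"
    obtain t M' where t: "t \<le> 23 * L + 51" and run2: "run prog t (50, M) = (131, M')"
      and out: "output_of (131, M') =
        map (\<lambda>i. write_edges (P + 1) 1 c (I(P + 1 := c + 1)) (Suc i)) [0..<P + 1 + 2 * c]"
      using run_build_star[OF M E(1) \<open>1 \<le> m\<close> E(2) True] unfolding P_def c_def by blast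
    note out
    also have "\<dots> = take P xs @ [c + 1] @ concat (map (\<lambda>i. [0, i]) [1..<c + 1])"
      by (rule map_write_edges) (use True in \<open>auto simp: P_def L_def I_def init_config_def\<close>)
    also have "\<dots> = reduction xs"
      using False True by (simp add: reduction_def Let_def P_def c_def L_def m_def)
    finally show ?thesis
      using run_trans[OF run1 run2] t halted by (intro exI[of _ "50 + t"]) (simp add: L_def)
  next
    case False
    obtain t M' where t: "t \<le> 7 * L + 35" and run2: "run prog t (50, M) = (131, M')"
      and out: "output_of (131, M') = map (\<lambda>i. I (Suc i)) [0..<L]"
      using run_copy_input[OF M E(1) \<open>1 \<le> m\<close> \<open>1 \<le> L\<close> E(3)] False by auto
    note out
    also have "\<dots> = xs"
      using output_of_init[of 0 xs] by (simp add: output_of_def I_def L_def init_config_def)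
    also have "\<dots> = reduction xs"
      using False by (simp add: reduction_def L_def m_def)
    finally show ?thesis
      using run_trans[OF run1 run2] t halted by (intro exI[of _ "50 + t"]) (simp add: L_def)
  qed
qed

section \<open>Output size\<close>

lemma bitlen_le: "bitlen n \<le> n"
proof (induction n rule: less_induct)
  case (less n)
  show ?case
  proof (cases "n = 0")
    case False
    then have "bitlen (n div 2) \<le> n div 2" using less by simp
    with False show ?thesis by (subst bitlen.simps) simp
  qed simp
qed

lemma input_size_append: "input_size (xs @ ys) = input_size xs + input_size ys"
  by (simp add: input_size_def)

lemma length_le_input_size: "length xs \<le> input_size xs"
  by (induction xs) (simp_all add: input_size_def)

lemma input_size_take: "input_size (take k xs) \<le> input_size xs"
  using input_size_append[of "take k xs" "drop k xs"] by simp

lemma input_size_le: "\<forall>x\<in>set xs. x \<le> B \<Longrightarrow> input_size xs \<le> length xs * (B + 1)"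
proof (induction xs)
  case (Cons x xs)
  then have "bitlen x \<le> B" using bitlen_le[of x] by (meson le_trans list.set_intros(1))
  with Cons show ?case by (simp add: input_size_def del: bitlen.simps)
qed (simp add: input_size_def)

lemma input_size_reduction: "input_size (reduction xs) \<le> 101 * (input_size xs + 1) ^ 2"
proof (cases "xs = [] \<or> hd xs = 0 \<or> length xs < 1 + hd xs * hd xs")
  case True
  then show ?thesis by (simp add: reduction_def power2_eq_square)
next
  case False
  define S P where "S = input_size xs" and "P = 1 + hd xs * hd xs"
  define c where "c = leaves (length xs - P)"
  define ys where "ys = [c + 1] @ concat (map (\<lambda>i. [0, i]) [1..<c + 1])"
  have "c \<le> S"
    using leaves_le[of "length xs - P"] length_le_input_size[of xs] unfolding c_def S_def by linarith
  have "length ys = 1 + 2 * c"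
    unfolding ys_def concat_edge_pairs by simp
  moreover have "\<forall>y\<in>set ys. y \<le> c + 1"
    by (auto simp: ys_def)
  ultimately have "input_size ys \<le> (1 + 2 * c) * (c + 2)"
    using input_size_le[of ys "c + 1"] by simp
  also have "\<dots> \<le> (1 + 2 * S) * (S + 2)"
    using \<open>c \<le> S\<close> by (intro mult_mono) auto
  finally have "input_size (take P xs) + input_size ys \<le> S + (1 + 2 * S) * (S + 2)"
    using input_size_take[of P xs] unfolding S_def by linarith
  also have "\<dots> \<le> 101 * (S + 1) ^ 2"
    by (simp add: power2_eq_square algebra_simps)
  finally show ?thesis
    using False by (simp add: reduction_def Let_def input_size_append P_def c_def ys_def S_def
        del: upt_Suc)
qed

lemma poly_time_computable_reduction: "poly_time_computable reduction"
proof -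
  have "\<exists>t. t \<le> 101 * (input_size xs + 1) ^ 2 \<and> halted prog (run prog t (init_config xs))
      \<and> output_of (run prog t (init_config xs)) = reduction xs" for xs
  proof -
    have "101 * (length xs + 1) \<le> 101 * (input_size xs + 1) ^ 2"
      using length_le_input_size[of xs] by (simp add: power2_eq_square)
    with prog_computes_reduction[of xs] show ?thesis
      using order_trans by blast
  qed
  with input_size_reduction show ?thesis
    unfolding poly_time_computable_def by blast
qed

theorem mainTheorem8:
  shows "poly_reducible PermRep_instances PermRep_yes TreeRep_instances TreeRep_yes"
  unfolding poly_reducible_def using poly_time_computable_reduction reduction_correct by blast

end
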